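(* Assume that for every $k=2,\dots,t$ the matrix $U^{(k)}$ is nonsingular. Then for every $k=1,\dots,t$ and every $j$ with $0\le j<\deg P^{(k)}_2$, $$\tilde S_{k,j}(F,G)=(\hat R_{k-1}\hat B_{k-1})^{J_{k,j}}\,\hat B_{k,j}\,\hat S_{k,j}(F,G).$$
   Context: Let $K$ be a field of characteristic zero; $|M|$ denotes the determinant of a square matrix $M$; $\deg$ denotes degree. Subresultant matrices. Let $A=a_px^p+\dots+a_0$, $B=b_qx^q+\dots+b_0$ over $K$ regarded with formal degrees $p\ge q>0$. For $0\le j<q$, $N^{(j)}(A,B)$ is the $(p+q-j)\times(p+q-2j)$ matrix whose $c$-th column ($c=1,\dots,q-j$) has $a_p,\dots,a_0$ in rows $c,\dots,c+p$ and zeros elsewhere, and whose $(q-j+c)$-th column ($c=1,\dots,p-j$) has $b_q,\dots,b_0$ in rows $c,\dots,c+q$ and zeros elsewhere. PRS. For nonzero $A,B\in K[x]$, $\deg A>\deg B$, a PRS is $(P_1,\dots,P_l)$, nonzero polynomials, $P_1=A$, $P_2=B$, $\deg P_{i-1}>\deg P_i$, $\alpha_iP_{i-2}=q_{i-1}P_{i-1}+\beta_iP_i$ ($i=3,\dots,l$) with $\alpha_i,\beta_i\in K\setminus\{0\}$, $q_{i-1}\in K[x]$, and $P_l=\gamma\gcd(A,B)$, $0\ne\gamma\in K$. Recursive PRS. $F=f_mx^m+\dots+f_0$, $G=g_nx^n+\dots+g_0\in K[x]$, $f_mg_n\ne0$, $m>n>0$. A complete recursive PRS consists of PRSs $(P^{(k)}_1,\dots,P^{(k)}_{l_k})$,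 $k=1,\dots,t$, $P^{(1)}_1=F$, $P^{(1)}_2=G$, for $k\ge2$ $P^{(k)}_1=P^{(k-1)}_{l_{k-1}}$, $P^{(k)}_2=\frac d{dx}P^{(k)}_1$; $P^{(k)}_{l_k}$ non-constant for $k<t$, $P^{(t)}_{l_t}$ constant. Assume $l_k\ge3$ for $k<t$. Notation: $n^{(k)}_i=\deg P^{(k)}_i$, $j_0=m$, $j_k=n^{(k)}_{l_k}$ (so $n^{(k)}_1=j_{k-1}$, $n^{(k)}_2=j_{k-1}-1$ for $k\ge2$). Nested subresultants ($0\le j<n^{(k)}_2$): $\tilde N^{(1,j)}=N^{(j)}(F,G)$; for $k\ge2$, $\tilde N^{(k,j)}=N^{(j)}\big(\tilde S_{k-1,j_{k-1}}(F,G),\frac d{dx}\tilde S_{k-1,j_{k-1}}(F,G)\big)$ with formal degrees $j_{k-1}$, $j_{k-1}-1$; $\tilde N^{(k,j)}_\tau$ ($\tau=0,\dots,j$) is formed by the top $n^{(k)}_1+n^{(k)}_2-2j-1$ rows and the $(n^{(k)}_1+n^{(k)}_2-j-\tau)$-th row of $\tilde N^{(k,j)}$, and $\tilde S_{k,j}(F,G)=\sum_{\tau=0}^j|\tilde N^{(k,j)}_\tau|x^\tau$. Reduced nested subresultants ($0\le j<n^{(k)}_2$). Set $J_{1,j}=m+n-2j$ and, for $k\ge2$, $I_{k,j}=2j_{k-1}-j-1$, $J_{k,j}=2j_{k-1}-2j-1$. $\hat N^{(1,j)}=N^{(j)}(F,G)$. For $k\ge2$, let $\hat N=\hat N^{(k-1,j_{k-1})}$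 with $J'$ columns; let $\hat N_U$ be $\hat N$ with its bottom $j_{k-1}+1$ rows deleted, written $\hat N_U=(U^{(k)}\mid\mathbf v^{(k)})$ with $U^{(k)}$ square and $\mathbf v^{(k)}$ a column, and let $\hat N_L$ be the bottom $j_{k-1}+1$ rows of $\hat N$, with rows $\boldsymbol\rho_1,\dots,\boldsymbol\rho_{j_{k-1}+1}$. For $\tau=0,\dots,j_{k-1}$, $\hat A_\tau=|\hat N_\tau|$ where $\hat N_\tau$ is $\hat N_U$ with $\boldsymbol\rho_{j_{k-1}-\tau+1}$ appended as last row; $\hat A(x)=\sum_\tau\hat A_\tau x^\tau$, and $H^{(k,j)}=N^{(j)}(\hat A(x),\frac d{dx}\hat A(x))$ with formal degrees $j_{k-1}$, $j_{k-1}-1$ (size $I_{k,j}\times J_{k,j}$). For each position $(p,q)$ define a row vector $\mathbf w_{p,q}$ of length $J'$: if $q\le j_{k-1}-1-j$ and $0\le p-q\le j_{k-1}$, $\mathbf w_{p,q}=\boldsymbol\rho_{p-q+1}$; if $q=j_{k-1}-1-j+q'$ with $1\le q'\le j_{k-1}-j$ and $0\le p-q'\le j_{k-1}-1$, $\mathbf w_{p,q}=(j_{k-1}-p+q')\boldsymbol\rho_{p-q'+1}$; otherwise $\mathbf w_{p,q}=\mathbf 0$ (so the $(p,q)$ entry of $H^{(k,j)}$ equals the determinant of $\hat N_U$ with $\mathbf w_{p,q}$ appended, or $0$). Write $\mathbf w_{p,q}=(\mathbf b_{p,q}\mid g_{p,q})$, $g_{p,q}$ its last entry; with $U^{(k)}$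 nonsingular let $\mathbf x_{p,q}U^{(k)}=-\mathbf b_{p,q}$ and $h^{(k,j)}_{p,q}=g_{p,q}+\mathbf x_{p,q}\mathbf v^{(k)}$. Then $\hat N^{(k,j)}=(h^{(k,j)}_{p,q})_{p\le I_{k,j},\,q\le J_{k,j}}$. For $\tau=0,\dots,j$, $\hat N^{(k,j)}_\tau$ is formed by the top $n^{(k)}_1+n^{(k)}_2-2j-1$ rows and the $(n^{(k)}_1+n^{(k)}_2-j-\tau)$-th row of $\hat N^{(k,j)}$, and $\hat S_{k,j}(F,G)=\sum_{\tau=0}^j|\hat N^{(k,j)}_\tau|x^\tau$. Constants. $\hat B_{1,j}=1$ and $\hat B_{k,j}=|U^{(k)}|^{J_{k,j}}$ for $k\ge2$; $\hat B_0=\hat B_1=1$, $\hat B_k=\hat B_{k,j_k}$ for $k\ge2$; $\hat R_0=\hat R_1=1$, $\hat R_k=(\hat R_{k-1}\hat B_{k-1})^{J_{k,j_k}}$ for $k\ge2$. *)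

theory Defs
  imports "HOL-Computational_Algebra.Polynomial"
          "HOL-Computational_Algebra.Polynomial_Factorial"
          "Jordan_Normal_Form.Determinant"
begin

text \<open>N^(j)(A,B) with formal degrees p (for A) and q (for B): a (p+q-j) x (p+q-2j)
  matrix.\<close>
definition subres_mat :: "nat \<Rightarrow> nat \<Rightarrow> nat \<Rightarrow> 'a::field poly \<Rightarrow> 'a poly \<Rightarrow> 'a mat" where
  "subres_mat p q j A B = mat (p + q - j) (p + q - 2 * j) (\<lambda>(r, c).
     if c < q - j then (if c \<le> r \<and> r - c \<le> p then coeff A (p - (r - c)) else 0)
     else (let c' = c - (q - j) in
           if c' \<le> r \<and> r - c' \<le> q then coeff B (q - (r - c')) else 0))"

text \<open>For s = n1 + n2: the matrix formed by the top s-2j-1 rows and the (s-j-tau)-th row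
  (1-based; 0-based row s-j-tau-1) of M.\<close>
definition sub_minor :: "nat \<Rightarrow> nat \<Rightarrow> 'a mat \<Rightarrow> nat \<Rightarrow> 'a mat" where
  "sub_minor s j M \<tau> = mat (s - 2 * j) (s - 2 * j) (\<lambda>(r, c).
     if r < s - 2 * j - 1 then M $$ (r, c) else M $$ (s - j - \<tau> - 1, c))"

definition subres_poly :: "nat \<Rightarrow> nat \<Rightarrow> 'a::field mat \<Rightarrow> 'a poly" where
  "subres_poly s j M = (\<Sum>\<tau>\<le>j. monom (det (sub_minor s j M \<tau>)) \<tau>)"

definition is_PRS :: "'a::field_gcd poly \<Rightarrow> 'a poly \<Rightarrow> (nat \<Rightarrow> 'a poly) \<Rightarrow> nat \<Rightarrow> bool" where
  "is_PRS A B P l \<longleftrightarrow>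
     A \<noteq> 0 \<and> B \<noteq> 0 \<and> degree A > degree B \<and> 2 \<le> l \<and>
     P 1 = A \<and> P 2 = B \<and>
     (\<forall>i\<in>{1..l}. P i \<noteq> 0) \<and>
     (\<forall>i\<in>{2..l}. degree (P (i - 1)) > degree (P i)) \<and>
     (\<forall>i\<in>{3..l}. \<exists>\<alpha> \<beta> q. \<alpha> \<noteq> 0 \<and> \<beta> \<noteq> 0 \<and>
         smult \<alpha> (P (i - 2)) = q * P (i - 1) + smult \<beta> (P i)) \<and>
     (\<exists>\<gamma>. \<gamma> \<noteq> 0 \<and> P l = smult \<gamma> (gcd A B))"

text \<open>Complete recursive PRS: P k i is P^(k)_i (k = 1..t, i = 1..l k).\<close>
definition complete_rec_PRS ::
  "'a::field_gcd poly \<Rightarrow> 'a poly \<Rightarrow> nat \<Rightarrow> (nat \<Rightarrow> nat \<Rightarrow> 'a poly) \<Rightarrow> (nat \<Rightarrow> nat) \<Rightarrow> bool" where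
  "complete_rec_PRS F G t P l \<longleftrightarrow>
     degree F > degree G \<and> degree G > 0 \<and> 1 \<le> t \<and>
     (\<forall>k\<in>{1..t}. is_PRS (P k 1) (P k 2) (P k) (l k)) \<and>
     P 1 1 = F \<and> P 1 2 = G \<and>
     (\<forall>k\<in>{2..t}. P k 1 = P (k - 1) (l (k - 1)) \<and> P k 2 = pderiv (P k 1)) \<and>
     (\<forall>k\<in>{1..<t}. degree (P k (l k)) > 0) \<and>
     degree (P t (l t)) = 0"

definition jseq :: "(nat \<Rightarrow> nat \<Rightarrow> 'a::zero poly) \<Rightarrow> (nat \<Rightarrow> nat) \<Rightarrow> nat \<Rightarrow> nat" where
  "jseq P l k = (if k = 0 then degree (P 1 1) else degree (P k (l k)))"

fun tildeS :: "(nat \<Rightarrow> nat) \<Rightarrow> 'a::field poly \<Rightarrow> 'a poly \<Rightarrow> nat \<Rightarrow> nat \<Rightarrow> 'a poly" where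
  "tildeS js F G 0 j = 0"
| "tildeS js F G (Suc 0) j =
     subres_poly (degree F + degree G) j (subres_mat (degree F) (degree G) j F G)"
| "tildeS js F G (Suc (Suc k)) j =
     (let d = js (Suc k); Q = tildeS js F G (Suc k) d in
      subres_poly (2 * d - 1) j (subres_mat d (d - 1) j Q (pderiv Q)))"

text \<open>Given Nh = hat N^(k-1, j_{k-1}) and d = j_{k-1}.  All of the following are
  0-based in matrix/vector positions; rho and w, h use the paper's 1-based indices.\<close>

definition red_topn :: "'a mat \<Rightarrow> nat \<Rightarrow> nat" where
  "red_topn Nh d = dim_row Nh - (d + 1)"

text \<open>N_U = (U | v): U = first dim_col-1 columns of the top rows, v = last column.\<close>
definition red_U :: "'a mat \<Rightarrow> nat \<Rightarrow> 'a mat" where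
  "red_U Nh d = mat (red_topn Nh d) (dim_col Nh - 1) (\<lambda>(r, c). Nh $$ (r, c))"

definition red_v :: "'a mat \<Rightarrow> nat \<Rightarrow> nat \<Rightarrow> 'a" where
  "red_v Nh d r = Nh $$ (r, dim_col Nh - 1)"

text \<open>rho_i (i = 1..d+1): the i-th of the bottom d+1 rows, as a function of the column.\<close>
definition red_rho :: "'a mat \<Rightarrow> nat \<Rightarrow> nat \<Rightarrow> nat \<Rightarrow> 'a" where
  "red_rho Nh d i c = Nh $$ (red_topn Nh d + i - 1, c)"

definition red_w :: "'a::field mat \<Rightarrow> nat \<Rightarrow> nat \<Rightarrow> nat \<Rightarrow> nat \<Rightarrow> nat \<Rightarrow> 'a" where
  "red_w Nh d j p q c =
     (if 1 \<le> q \<and> q \<le> d - 1 - j \<and> q \<le> p \<and> p - q \<le> d then red_rho Nh d (p - q + 1) c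
      else if d - 1 - j < q \<and> q - (d - 1 - j) \<le> d - j \<and>
              q - (d - 1 - j) \<le> p \<and> p - (q - (d - 1 - j)) \<le> d - 1
      then of_nat (d - (p - (q - (d - 1 - j)))) * red_rho Nh d (p - (q - (d - 1 - j)) + 1) c
      else 0)"

text \<open>x_{p,q} with x_{p,q} U = - b_{p,q} (b = all but the last entry of w).\<close>
definition red_x :: "'a::field mat \<Rightarrow> nat \<Rightarrow> nat \<Rightarrow> nat \<Rightarrow> nat \<Rightarrow> nat \<Rightarrow> 'a" where
  "red_x Nh d j p q = (SOME x. \<forall>c < dim_col Nh - 1.
       (\<Sum>r < red_topn Nh d. x r * red_U Nh d $$ (r, c)) = - red_w Nh d j p q c)"

definition red_h :: "'a::field mat \<Rightarrow> nat \<Rightarrow> nat \<Rightarrow> nat \<Rightarrow> nat \<Rightarrow> 'a" where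
  "red_h Nh d j p q = red_w Nh d j p q (dim_col Nh - 1)
     + (\<Sum>r < red_topn Nh d. red_x Nh d j p q r * red_v Nh d r)"

definition red_step :: "'a::field mat \<Rightarrow> nat \<Rightarrow> nat \<Rightarrow> 'a mat" where
  "red_step Nh d j = mat (2 * d - j - 1) (2 * d - 2 * j - 1)
     (\<lambda>(p, q). red_h Nh d j (p + 1) (q + 1))"

fun hatN :: "(nat \<Rightarrow> nat) \<Rightarrow> 'a::field poly \<Rightarrow> 'a poly \<Rightarrow> nat \<Rightarrow> nat \<Rightarrow> 'a mat" where
  "hatN js F G 0 j = 0\<^sub>m 0 0"
| "hatN js F G (Suc 0) j = subres_mat (degree F) (degree G) j F G"
| "hatN js F G (Suc (Suc k)) j =
     red_step (hatN js F G (Suc k) (js (Suc k))) (js (Suc k)) j"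

definition Umat :: "(nat \<Rightarrow> nat) \<Rightarrow> 'a::field poly \<Rightarrow> 'a poly \<Rightarrow> nat \<Rightarrow> 'a mat" where
  "Umat js F G k = red_U (hatN js F G (k - 1) (js (k - 1))) (js (k - 1))"

definition hatS :: "(nat \<Rightarrow> nat) \<Rightarrow> 'a::field poly \<Rightarrow> 'a poly \<Rightarrow> nat \<Rightarrow> nat \<Rightarrow> 'a poly" where
  "hatS js F G k j =
     subres_poly (if k = 1 then degree F + degree G else 2 * js (k - 1) - 1) j (hatN js F G k j)"

definition Jkj :: "(nat \<Rightarrow> nat) \<Rightarrow> 'a::zero poly \<Rightarrow> 'a poly \<Rightarrow> nat \<Rightarrow> nat \<Rightarrow> nat" where
  "Jkj js F G k j = (if k = 1 then degree F + degree G - 2 * j else 2 * js (k - 1) - 2 * j - 1)"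

definition hatBkj :: "(nat \<Rightarrow> nat) \<Rightarrow> 'a::field poly \<Rightarrow> 'a poly \<Rightarrow> nat \<Rightarrow> nat \<Rightarrow> 'a" where
  "hatBkj js F G k j = (if k \<le> 1 then 1 else det (Umat js F G k) ^ Jkj js F G k j)"

definition hatB :: "(nat \<Rightarrow> nat) \<Rightarrow> 'a::field poly \<Rightarrow> 'a poly \<Rightarrow> nat \<Rightarrow> 'a" where
  "hatB js F G k = (if k \<le> 1 then 1 else hatBkj js F G k (js k))"

fun hatR :: "(nat \<Rightarrow> nat) \<Rightarrow> 'a::field poly \<Rightarrow> 'a poly \<Rightarrow> nat \<Rightarrow> 'a" where
  "hatR js F G 0 = 1"
| "hatR js F G (Suc 0) = 1"
| "hatR js F G (Suc (Suc k)) =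
     (hatR js F G (Suc k) * hatB js F G (Suc k)) ^ Jkj js F G (Suc (Suc k)) (js (Suc (Suc k)))"

end

theory Submission
  imports Defs
begin

(* Fix a level k >= 2 and write N for the reduced matrix of level k-1, d = j_{k-1},
   U, v for the top part of N and rho_i for its bottom d+1 rows.  Every minor used by
   the construction is the determinant of a "bordered" matrix: the top rows of N with
   one extra row w appended.  Such a determinant is linear in w, and when U is
   nonsingular it factors (Schur complement) as det U * (g + x v), where x U = -b for
   w = (b | g).  Hence:
     (1) the coefficients of A = S(level k-1, d) are bordered determinants on rho_i, and
         so are those of A', up to the integer factors of the derivative;
     (2) therefore N^(j)(A, A') = det U . hatN^(k,j) entrywise;
     (3) subresultant polynomials are homogeneous: scaling an s x (s-2j) block matrix by a
         multiplies its polynomial by a^(s-2j), and N^(j)(cA, cA') = c . N^(j)(A, A').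
   Combining (1)-(3) with the induction hypothesis at level k-1 (tildeS = c . hatS) gives
   the claim at level k, which is the induction step of the main theorem.  The degree
   bookkeeping needed to apply the step (1 <= j_{k-1} and the matrix is tall enough)
   comes from the strict degree decrease inside each PRS. *)

section \<open>Determinants of bordered matrices\<close>

definition bordered :: "'a::comm_ring_1 mat \<Rightarrow> nat \<Rightarrow> (nat \<Rightarrow> 'a) \<Rightarrow> 'a mat" where
  "bordered N n w = mat (Suc n) (Suc n) (\<lambda>(r, c). if r < n then N $$ (r, c) else w c)"

text \<open>Cofactors along the appended row; they do not depend on that row.\<close>
definition border_cof :: "'a::comm_ring_1 mat \<Rightarrow> nat \<Rightarrow> nat \<Rightarrow> 'a" where
  "border_cof N n c = cofactor (bordered N n (\<lambda>_. 0)) n c"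

lemma bordered_carrier [simp]: "bordered N n w \<in> carrier_mat (Suc n) (Suc n)"
  unfolding bordered_def by auto

text \<open>Laplace expansion along the last row: the determinant is linear in \<open>w\<close>.\<close>
lemma det_bordered: "det (bordered N n w) = (\<Sum>c<Suc n. w c * border_cof N n c)"
proof -
  have "det (bordered N n w) = (\<Sum>c<Suc n. bordered N n w $$ (n, c) * cofactor (bordered N n w) n c)"
    by (rule laplace_expansion_row[OF bordered_carrier]) simp
  also have "\<dots> = (\<Sum>c<Suc n. w c * border_cof N n c)"
  proof (rule sum.cong[OF refl])
    fix c assume c: "c \<in> {..<Suc n}"
    have "mat_delete (bordered N n w) n c = mat_delete (bordered N n (\<lambda>_. 0)) n c"
      unfolding mat_delete_def bordered_def by (rule eq_matI) auto
    then show "bordered N n w $$ (n, c) * cofactor (bordered N n w) n c = w c * border_cof N n c"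
      using c unfolding border_cof_def cofactor_def by (simp add: bordered_def)
  qed
  finally show ?thesis .
qed

lemma det_bordered_smult: "det (bordered N n (\<lambda>c. a * w c)) = a * det (bordered N n w)"
  unfolding det_bordered by (simp add: sum_distrib_left mult.assoc del: sum.lessThan_Suc)

lemma det_bordered_zero: "det (bordered N n (\<lambda>_. 0)) = 0"
  unfolding det_bordered by simp

text \<open>Appending one of the top rows gives a singular matrix, so the cofactors are
  orthogonal to every top row.\<close>
lemma border_cof_orthogonal:
  assumes "r < n"
  shows "(\<Sum>c<Suc n. N $$ (r, c) * border_cof N n c) = 0"
proof -
  have "det (bordered N n (\<lambda>c. N $$ (r, c))) = 0"
    by (rule det_identical_rows[OF bordered_carrier, of r n]) (use assms in \<open>auto simp: bordered_def\<close>)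
  then show ?thesis unfolding det_bordered .
qed

lemma border_cof_last: "border_cof N n n = det (mat n n (\<lambda>(r, c). N $$ (r, c)))"
proof -
  have "mat_delete (bordered N n (\<lambda>_. 0)) n n = mat n n (\<lambda>(r, c). N $$ (r, c))"
    unfolding mat_delete_def bordered_def by (rule eq_matI) auto
  then show ?thesis unfolding border_cof_def cofactor_def by simp
qed

lemma det_bordered_schur:
  assumes x: "\<forall>c<n. (\<Sum>r<n. x r * N $$ (r, c)) = - w c"
  shows "det (bordered N n w) = det (mat n n (\<lambda>(r, c). N $$ (r, c))) * (w n + (\<Sum>r<n. x r * N $$ (r, n)))"
proof -
  let ?K = "border_cof N n"
  have orth: "(\<Sum>c<n. N $$ (r, c) * ?K c) = - (N $$ (r, n) * ?K n)" if "r < n" for r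
    using border_cof_orthogonal[OF that] by (simp add: eq_neg_iff_add_eq_0)
  have "det (bordered N n w) = (\<Sum>c<n. w c * ?K c) + w n * ?K n"
    unfolding det_bordered by simp
  also have "(\<Sum>c<n. w c * ?K c) = (\<Sum>c<n. - (\<Sum>r<n. x r * N $$ (r, c)) * ?K c)"
    using x by (intro sum.cong) auto
  also have "\<dots> = - (\<Sum>c<n. \<Sum>r<n. x r * N $$ (r, c) * ?K c)"
    by (simp add: sum_distrib_right sum_negf)
  also have "\<dots> = - (\<Sum>r<n. x r * (\<Sum>c<n. N $$ (r, c) * ?K c))"
    by (subst sum.swap) (simp add: sum_distrib_left mult.assoc)
  also have "\<dots> = (\<Sum>r<n. x r * N $$ (r, n)) * ?K n"
    by (simp add: orth sum_distrib_right sum_negf mult.assoc)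
  finally show ?thesis unfolding border_cof_last[symmetric] by (simp add: algebra_simps)
qed

lemma left_solvable:
  fixes U :: "'a::field mat"
  assumes U: "U \<in> carrier_mat n n" and nonsing: "det U \<noteq> 0"
  shows "\<exists>x. \<forall>c<n. (\<Sum>r<n. x r * U $$ (r, c)) = b c"
proof -
  define A where "A = adj_mat U"
  have AU: "A * U = det U \<cdot>\<^sub>m 1\<^sub>m n" and A: "A \<in> carrier_mat n n"
    using adj_mat[OF U] unfolding A_def by auto
  have AU_entry: "(\<Sum>r<n. A $$ (i, r) * U $$ (r, c)) = (if i = c then det U else 0)"
    if "i < n" "c < n" for i c
  proof -
    have "(A * U) $$ (i, c) = (\<Sum>r<n. A $$ (i, r) * U $$ (r, c))"
      using A U that by (simp add: scalar_prod_def atLeast0LessThan)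
    then show ?thesis using AU that by (simp split: if_splits)
  qed
  define x where "x r = (\<Sum>i<n. b i * A $$ (i, r)) / det U" for r
  have "(\<Sum>r<n. x r * U $$ (r, c)) = b c" if c: "c < n" for c
  proof -
    have "(\<Sum>r<n. x r * U $$ (r, c)) = (\<Sum>i<n. b i * (\<Sum>r<n. A $$ (i, r) * U $$ (r, c))) / det U"
    proof -
      have "(\<Sum>r<n. x r * U $$ (r, c)) = (\<Sum>r<n. \<Sum>i<n. b i * A $$ (i, r) * U $$ (r, c)) / det U"
        unfolding x_def by (simp add: sum_divide_distrib sum_distrib_right)
      also have "\<dots> = (\<Sum>i<n. \<Sum>r<n. b i * A $$ (i, r) * U $$ (r, c)) / det U"
        by (subst sum.swap) (rule refl)
      finally show ?thesis by (simp add: sum_distrib_left mult.assoc)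
    qed
    also have "\<dots> = (\<Sum>i<n. b i * (if i = c then det U else 0)) / det U"
      using c by (simp add: AU_entry)
    finally show ?thesis using c nonsing by (simp add: if_distrib cong: if_cong)
  qed
  then show ?thesis by blast
qed

section \<open>The reduced entries as bordered determinants\<close>

lemma det_red_U_mult_red_h:
  fixes N :: "'a::field mat"
  assumes rows: "dim_row N = s - d" and cols: "dim_col N = s - 2 * d" and tall: "2 * d + 1 \<le> s"
    and nonsing: "det (red_U N d) \<noteq> 0"
  shows "det (red_U N d) * red_h N d j p q = det (bordered N (s - 2 * d - 1) (red_w N d j p q))"
proof -
  define n where "n = s - 2 * d - 1"
  have sizes: "red_topn N d = n" "dim_col N - 1 = n"
    unfolding red_topn_def n_def rows cols using tall by auto
  have U: "red_U N d = mat n n (\<lambda>(r, c). N $$ (r, c))"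
    unfolding red_U_def sizes by simp
  have "\<exists>x. \<forall>c<n. (\<Sum>r<n. x r * red_U N d $$ (r, c)) = - red_w N d j p q c"
    by (rule left_solvable[OF _ nonsing]) (simp add: U)
  then have "\<forall>c<n. (\<Sum>r<n. red_x N d j p q r * red_U N d $$ (r, c)) = - red_w N d j p q c"
    unfolding red_x_def sizes by (rule someI_ex)
  then have "\<forall>c<n. (\<Sum>r<n. red_x N d j p q r * N $$ (r, c)) = - red_w N d j p q c"
    by (simp add: U)
  from det_bordered_schur[OF this] show ?thesis
    unfolding n_def[symmetric] U[symmetric] red_h_def red_v_def sizes by simp
qed

lemma coeff_subres_poly:
  "coeff (subres_poly s j M) \<tau> = (if \<tau> \<le> j then det (sub_minor s j M \<tau>) else 0)"
  unfolding subres_poly_def by (simp add: coeff_sum coeff_monom)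

lemma coeff_subres_poly_bordered:
  assumes rows: "dim_row N = s - d" and cols: "dim_col N = s - 2 * d" and tall: "2 * d + 1 \<le> s"
    and "i \<le> d"
  shows "coeff (subres_poly s d N) (d - i) = det (bordered N (s - 2 * d - 1) (red_rho N d (i + 1)))"
proof -
  have "sub_minor s d N (d - i) = bordered N (s - 2 * d - 1) (red_rho N d (i + 1))"
    unfolding sub_minor_def bordered_def red_rho_def red_topn_def rows
    by (rule eq_matI) (use tall \<open>i \<le> d\<close> in \<open>auto simp: Suc_diff_Suc\<close>)
  then show ?thesis by (simp add: coeff_subres_poly)
qed

lemma coeff_pderiv_from_top:
  assumes "i \<le> d - 1" "1 \<le> d"
  shows "coeff (pderiv A) (d - 1 - i) = of_nat (d - i) * coeff A (d - i)"
proof -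
  have "Suc (d - 1 - i) = d - i" using assms by arith
  then show ?thesis unfolding coeff_pderiv by simp
qed

text \<open>Each entry of the subresultant matrix of \<open>A = S_d\<close> and \<open>A'\<close> is the bordered
  determinant on \<open>w_{p,q}\<close>: the first \<open>d-1-j\<close> columns carry coefficients of \<open>A\<close>, the
  remaining ones those of \<open>A'\<close>, i.e. the weighted rows \<open>(d-i) \<rho>_{i+1}\<close>.\<close>
lemma subres_mat_entry_bordered:
  fixes N :: "'a::field mat"
  assumes rows: "dim_row N = s - d" and cols: "dim_col N = s - 2 * d" and tall: "2 * d + 1 \<le> s"
    and d: "1 \<le> d" and r: "r < 2 * d - j - 1" and c: "c < 2 * d - 2 * j - 1"
  defines "A \<equiv> subres_poly s d N"
  shows "subres_mat d (d - 1) j A (pderiv A) $$ (r, c)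
         = det (bordered N (s - 2 * d - 1) (red_w N d j (r + 1) (c + 1)))"
proof -
  let ?n = "s - 2 * d - 1"
  note coeffA = coeff_subres_poly_bordered[OF rows cols tall, folded A_def]
  have entry: "subres_mat d (d - 1) j A (pderiv A) $$ (r, c) =
     (if c < d - 1 - j then (if c \<le> r \<and> r - c \<le> d then coeff A (d - (r - c)) else 0)
      else (if c - (d - 1 - j) \<le> r \<and> r - (c - (d - 1 - j)) \<le> d - 1
            then coeff (pderiv A) (d - 1 - (r - (c - (d - 1 - j)))) else 0))"
    using r c d by (simp add: subres_mat_def Let_def)
  consider (A_band) "c < d - 1 - j" "c \<le> r" "r - c \<le> d"
    | (A_zero) "c < d - 1 - j" "\<not> (c \<le> r \<and> r - c \<le> d)"
    | (dA_band) "\<not> c < d - 1 - j" "c - (d - 1 - j) \<le> r" "r - (c - (d - 1 - j)) \<le> d - 1"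
    | (dA_zero) "\<not> c < d - 1 - j" "\<not> (c - (d - 1 - j) \<le> r \<and> r - (c - (d - 1 - j)) \<le> d - 1)"
    by blast
  then show ?thesis
  proof cases
    case A_band
    then have "red_w N d j (r + 1) (c + 1) = red_rho N d (r - c + 1)"
      by (intro ext) (auto simp: red_w_def)
    then show ?thesis using A_band coeffA[of "r - c"] entry by simp
  next
    case A_zero
    then have "red_w N d j (r + 1) (c + 1) = (\<lambda>_. 0)"
      by (intro ext) (auto simp: red_w_def)
    then show ?thesis using A_zero entry det_bordered_zero by auto
  next
    case dA_band
    define i where "i = r - (c - (d - 1 - j))"
    have "red_w N d j (r + 1) (c + 1) = (\<lambda>e. of_nat (d - i) * red_rho N d (i + 1) e)"
      using dA_band c unfolding i_def by (intro ext) (auto simp: red_w_def)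
    moreover have "coeff (pderiv A) (d - 1 - i) = of_nat (d - i) * coeff A (d - i)"
      using dA_band d unfolding i_def by (intro coeff_pderiv_from_top) auto
    ultimately show ?thesis
      using dA_band entry coeffA[of i] unfolding i_def[symmetric]
      by (simp add: det_bordered_smult del: of_nat_diff)
  next
    case dA_zero
    then have "red_w N d j (r + 1) (c + 1) = (\<lambda>_. 0)"
      using c by (intro ext) (auto simp: red_w_def)
    then show ?thesis using dA_zero entry det_bordered_zero by auto
  qed
qed

lemma subres_mat_red_step:
  fixes N :: "'a::field mat"
  assumes rows: "dim_row N = s - d" and cols: "dim_col N = s - 2 * d" and tall: "2 * d + 1 \<le> s"
    and d: "1 \<le> d" and nonsing: "det (red_U N d) \<noteq> 0"
  shows "subres_mat d (d - 1) j (subres_poly s d N) (pderiv (subres_poly s d N))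
         = det (red_U N d) \<cdot>\<^sub>m red_step N d j"
proof (rule eq_matI)
  fix r c
  assume "r < dim_row (det (red_U N d) \<cdot>\<^sub>m red_step N d j)"
    and "c < dim_col (det (red_U N d) \<cdot>\<^sub>m red_step N d j)"
  then have r: "r < 2 * d - j - 1" and c: "c < 2 * d - 2 * j - 1"
    by (auto simp: red_step_def)
  show "subres_mat d (d - 1) j (subres_poly s d N) (pderiv (subres_poly s d N)) $$ (r, c)
        = (det (red_U N d) \<cdot>\<^sub>m red_step N d j) $$ (r, c)"
    using subres_mat_entry_bordered[OF rows cols tall d r c] r c
      det_red_U_mult_red_h[OF rows cols tall nonsing]
    by (simp add: red_step_def)
qed (use d in \<open>auto simp: subres_mat_def red_step_def\<close>)

section \<open>Homogeneity of subresultants\<close>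

lemma subres_mat_smult:
  "subres_mat p q j (smult a A) (smult a B) = a \<cdot>\<^sub>m subres_mat p q j A B"
  unfolding subres_mat_def by (rule eq_matI) (auto simp: Let_def)

lemma sub_minor_smult:
  assumes "dim_row M = s - j" "dim_col M = s - 2 * j"
  shows "sub_minor s j (a \<cdot>\<^sub>m M) \<tau> = a \<cdot>\<^sub>m sub_minor s j M \<tau>"
  unfolding sub_minor_def by (rule eq_matI) (use assms in auto)

lemma smult_sum_right: "smult a (\<Sum>i\<in>S. f i) = (\<Sum>i\<in>S. smult a (f i))"
  by (induction S rule: infinite_finite_induct) (auto simp: smult_add_right)

text \<open>Each minor has size \<open>s - 2j\<close>, so scaling the matrix scales the polynomial by
  \<open>a^(s-2j)\<close>.\<close>
lemma subres_poly_smult: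
  assumes "dim_row M = s - j" "dim_col M = s - 2 * j"
  shows "subres_poly s j (a \<cdot>\<^sub>m M) = smult (a ^ (s - 2 * j)) (subres_poly s j M)"
  unfolding subres_poly_def sub_minor_smult[OF assms]
  by (simp add: smult_sum_right smult_monom sub_minor_def)

text \<open>The size parameter \<open>n_1 + n_2\<close> of level \<open>k \<ge> 1\<close>.\<close>
definition level_size :: "(nat \<Rightarrow> nat) \<Rightarrow> 'a::zero poly \<Rightarrow> 'a poly \<Rightarrow> nat \<Rightarrow> nat" where
  "level_size js F G k = (if k = 1 then degree F + degree G else 2 * js (k - 1) - 1)"

lemma hatN_dims:
  "dim_row (hatN js F G (Suc k) j) = level_size js F G (Suc k) - j"
  "dim_col (hatN js F G (Suc k) j) = level_size js F G (Suc k) - 2 * j"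
  by (cases k; simp add: level_size_def subres_mat_def red_step_def)+

lemma hatS_level_size:
  "hatS js F G (Suc k) j = subres_poly (level_size js F G (Suc k)) j (hatN js F G (Suc k) j)"
  unfolding hatS_def level_size_def by simp

lemma hatR_hatB_Suc:
  "hatR js F G (Suc k) * hatB js F G (Suc k) =
   (hatR js F G k * hatB js F G k) ^ Jkj js F G (Suc k) (js (Suc k)) * hatBkj js F G (Suc k) (js (Suc k))"
  by (cases k) (auto simp: hatB_def hatBkj_def)

lemma nested_step:
  fixes F G :: "'a::field poly"
  assumes IH: "tildeS js F G (Suc k) (js (Suc k)) =
       smult ((hatR js F G k * hatB js F G k) ^ Jkj js F G (Suc k) (js (Suc k))
              * hatBkj js F G (Suc k) (js (Suc k)))
         (hatS js F G (Suc k) (js (Suc k)))"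
    and tall: "2 * js (Suc k) + 1 \<le> level_size js F G (Suc k)" and d: "1 \<le> js (Suc k)"
    and nonsing: "det (Umat js F G (Suc (Suc k))) \<noteq> 0"
  shows "tildeS js F G (Suc (Suc k)) j =
       smult ((hatR js F G (Suc k) * hatB js F G (Suc k)) ^ Jkj js F G (Suc (Suc k)) j
              * hatBkj js F G (Suc (Suc k)) j)
         (hatS js F G (Suc (Suc k)) j)"
proof -
  define d where "d = js (Suc k)"
  define c where "c = hatR js F G (Suc k) * hatB js F G (Suc k)"
  define N where "N = hatN js F G (Suc k) d"
  define A where "A = subres_poly (level_size js F G (Suc k)) d N"
  define e where "e = det (red_U N d)"
  have U: "Umat js F G (Suc (Suc k)) = red_U N d"
    unfolding Umat_def N_def d_def by simp
  have tilde_prev: "tildeS js F G (Suc k) d = smult c A"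
    using IH unfolding c_def hatR_hatB_Suc A_def hatS_level_size N_def d_def .
  have key: "subres_mat d (d - 1) j A (pderiv A) = e \<cdot>\<^sub>m red_step N d j"
    unfolding A_def e_def using hatN_dims tall d nonsing
    by (intro subres_mat_red_step) (auto simp: N_def d_def U)
  have dims: "dim_row (red_step N d j) = (2 * d - 1) - j" "dim_col (red_step N d j) = (2 * d - 1) - 2 * j"
    by (auto simp: red_step_def)
  have J: "Jkj js F G (Suc (Suc k)) j = 2 * d - 1 - 2 * j"
    unfolding Jkj_def d_def by simp
  have "tildeS js F G (Suc (Suc k)) j = subres_poly (2 * d - 1) j (subres_mat d (d - 1) j (smult c A) (pderiv (smult c A)))"
    using tilde_prev by (simp add: d_def Let_def)
  also have "\<dots> = subres_poly (2 * d - 1) j (c \<cdot>\<^sub>m (e \<cdot>\<^sub>m red_step N d j))"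
    unfolding pderiv_smult subres_mat_smult key ..
  also have "\<dots> = smult (c ^ (2 * d - 1 - 2 * j) * e ^ (2 * d - 1 - 2 * j)) (subres_poly (2 * d - 1) j (red_step N d j))"
    using dims by (simp add: subres_poly_smult)
  also have "\<dots> = smult (c ^ Jkj js F G (Suc (Suc k)) j * hatBkj js F G (Suc (Suc k)) j)
                    (hatS js F G (Suc (Suc k)) j)"
    unfolding J hatBkj_def hatS_def by (simp add: e_def U N_def d_def J)
  finally show ?thesis unfolding c_def .
qed

section \<open>Degree bookkeeping for a complete recursive PRS\<close>

lemma PRS_degree_drop:
  assumes P: "is_PRS A B Q L" and i: "2 \<le> i" "i \<le> L"
  shows "degree (Q i) + (i - 2) \<le> degree (Q 2)"
  using i
proof (induction i rule: dec_induct)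
  case (step m)
  have "Suc m \<in> {2..L}" using step by auto
  then have "degree (Q m) > degree (Q (Suc m))"
    using P unfolding is_PRS_def by fastforce
  then show ?case using step by simp
qed simp

lemma rec_PRS_level_bounds:
  fixes F G :: "'a::{field_char_0,field_gcd} poly"
  assumes rec: "complete_rec_PRS F G t P l" and long: "\<forall>k\<in>{1..<t}. 3 \<le> l k"
    and k: "Suc (Suc k) \<le> t"
  shows "1 \<le> jseq P l (Suc k)" "2 * jseq P l (Suc k) + 1 \<le> level_size (jseq P l) F G (Suc k)"
proof -
  let ?js = "jseq P l"
  have js: "?js (Suc n) = degree (P (Suc n) (l (Suc n)))" for n
    unfolding jseq_def by simp
  have PRS: "is_PRS (P (Suc k) 1) (P (Suc k) 2) (P (Suc k)) (l (Suc k))" and "3 \<le> l (Suc k)"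
    using rec long k unfolding complete_rec_PRS_def by auto
  then have drop: "?js (Suc k) < degree (P (Suc k) 2)"
    using PRS_degree_drop[OF PRS, of "l (Suc k)"] by (simp add: js)
  show pos: "1 \<le> ?js (Suc k)"
    using rec k unfolding complete_rec_PRS_def js by (simp add: Suc_le_eq)
  show "2 * ?js (Suc k) + 1 \<le> level_size ?js F G (Suc k)"
  proof (cases k)
    case 0
    then show ?thesis using drop rec unfolding complete_rec_PRS_def by (simp add: level_size_def)
  next
    case (Suc k')
    then have "Suc k \<in> {2..t}" using k by auto
    then have "degree (P (Suc k) 2) = ?js (Suc k') - 1"
      using rec \<open>k = Suc k'\<close> unfolding complete_rec_PRS_def by (simp add: degree_pderiv js)
    then show ?thesis using drop pos Suc by (simp add: level_size_def)
  qed
qed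

theorem mainTheorem8:
  fixes F G :: "'a::{field_char_0,field_gcd} poly"
    and t :: nat and P :: "nat \<Rightarrow> nat \<Rightarrow> 'a poly" and l :: "nat \<Rightarrow> nat"
  assumes "complete_rec_PRS F G t P l"
    and "\<forall>k\<in>{1..<t}. 3 \<le> l k"
    and "\<forall>k\<in>{2..t}. det (Umat (jseq P l) F G k) \<noteq> 0"
  shows "\<forall>k\<in>{1..t}. \<forall>j < degree (P k 2).
           tildeS (jseq P l) F G k j =
           smult ((hatR (jseq P l) F G (k - 1) * hatB (jseq P l) F G (k - 1))
                    ^ Jkj (jseq P l) F G k j * hatBkj (jseq P l) F G k j)
                 (hatS (jseq P l) F G k j)"
proof -
  let ?js = "jseq P l"
  have all_j: "\<forall>j. tildeS ?js F G (Suc k) j =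
      smult ((hatR ?js F G k * hatB ?js F G k) ^ Jkj ?js F G (Suc k) j * hatBkj ?js F G (Suc k) j)
        (hatS ?js F G (Suc k) j)" if "Suc k \<le> t" for k
    using that
  proof (induction k)
    case 0 \<comment> \<open>at level 1 both constructions use \<open>N^(j)(F, G)\<close> and all constants are 1\<close>
    show ?case by (simp add: hatS_def hatB_def hatBkj_def)
  next
    case (Suc k)
    then show ?case
      using nested_step rec_PRS_level_bounds[OF assms(1,2) Suc.prems] assms(3) by force
  qed
  show ?thesis
  proof (intro ballI allI impI)
    fix k j assume "k \<in> {1..t}"
    then show "tildeS ?js F G k j = smult ((hatR ?js F G (k - 1) * hatB ?js F G (k - 1))
                 ^ Jkj ?js F G k j * hatBkj ?js F G k j) (hatS ?js F G k j)"
      using all_j[of "k - 1"] by simp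
  qed
qed

end
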